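(* Let $X$ be a time-homogeneous Markov chain on $\mathbf{R}$ with arbitrary initial distribution and renewal measure $U(B)=\sum_{n\ge0}\mathbf{P}\{X_n\in B\}$, whose jumps are nonnegative, $\xi(x)\ge0$ a.s. for all $x$. Suppose there is $A>0$ with $\gamma:=\inf_{x\in\mathbf{R}}\mathbf{P}\{\xi(x)>A\}>0$. Then $U(x,x+h]\le (A+h)/(\gamma^2A)$ for all $x\in\mathbf{R}$ and $h>0$.
   Context: $\xi(x)$ denotes a random variable with $\mathbf{P}\{x+\xi(x)\in B\}=P(x,B)$, $P$ being the transition kernel of the chain. *)

theory Defs
  imports "HOL-Probability.Probability"
begin

text \<open>Law of X_n for a time-homogeneous Markov chain on the reals with initial
  distribution mu and transition kernel K (K x = law of x + xi(x)).\<close>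
definition markov_law :: "real measure \<Rightarrow> (real \<Rightarrow> real measure) \<Rightarrow> nat \<Rightarrow> real measure" where
  "markov_law \<mu> K n = ((\<lambda>M. M \<bind> K) ^^ n) \<mu>"

definition renewal_measure :: "real measure \<Rightarrow> (real \<Rightarrow> real measure) \<Rightarrow> real set \<Rightarrow> ennreal" where
  "renewal_measure \<mu> K B = (\<Sum>n. emeasure (markov_law \<mu> K n) B)"

end

theory Submission
  imports Defs
begin

(* Proof idea (a Lyapunov-function / drift argument).
   Let I = (x, x+h] and take the ramp  g(y) = min ((A+h)/A) (max 0 ((x+h-y)/A + 1)),
   a nonincreasing function with values in [0, (A+h)/A] that drops by at least 1
   between any y in I and any z > y + A.  Since the jumps are nonnegative, the
   chain can only move to the right, so for every state y
        E g(y + xi(y)) + gamma * 1_I(y) <= g(y).                         (drift)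
   Summing the drift inequality along the chain (telescoping) gives
        gamma * U(I) <= E g(X_0) <= (A+h)/A,
   hence U(I) <= (A+h)/(gamma A) <= (A+h)/(gamma^2 A) because gamma <= 1.
   The file first proves the telescoping bound for an arbitrary nonnegative
   drift function (lemma drift_renewal_bound), then the drift inequality for
   any nonincreasing function with a unit drop across distance A
   (lemma drift_step_nonneg_jumps), then the properties of the ramp, and
   finally derives mainTheorem5. *)

lemma markov_law_prob_algebra:
  assumes "\<mu> \<in> space (prob_algebra borel)" "K \<in> borel \<rightarrow>\<^sub>M prob_algebra borel"
  shows "markov_law \<mu> K n \<in> space (prob_algebra borel)"
proof (induction n)
  case 0
  then show ?case using assms by (simp add: markov_law_def)
next
  case (Suc n)
  have "markov_law \<mu> K (Suc n) = markov_law \<mu> K n \<bind> K"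
    by (simp add: markov_law_def)
  then show ?case
    using prob_space_bind'[OF Suc assms(2)] sets_bind'[OF Suc assms(2)]
    by (simp add: space_prob_algebra)
qed

lemma drift_renewal_bound:
  fixes g :: "real \<Rightarrow> ennreal" and c :: ennreal
  assumes init: "prob_space \<mu>" "sets \<mu> = sets borel"
    and kernel: "K \<in> borel \<rightarrow>\<^sub>M prob_algebra borel"
    and g_meas: "g \<in> borel_measurable borel"
    and I_meas: "I \<in> sets borel"
    and drift: "\<And>y. (\<integral>\<^sup>+z. g z \<partial>K y) + c * indicator I y \<le> g y"
  shows "c * renewal_measure \<mu> K I \<le> (\<integral>\<^sup>+y. g y \<partial>\<mu>)"
proof -
  define L where "L = markov_law \<mu> K"
  have L_sets: "sets (L n) = sets borel" for n
    using markov_law_prob_algebra[of \<mu> K n] init kernel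
    by (simp add: L_def space_prob_algebra)
  have K_meas: "K \<in> L n \<rightarrow>\<^sub>M subprob_algebra borel" for n
    using measurable_prob_algebraD[OF kernel] L_sets[of n] by (simp cong: measurable_cong_sets)
  have one_step: "(\<integral>\<^sup>+y. g y \<partial>L (Suc n)) + c * emeasure (L n) I \<le> (\<integral>\<^sup>+y. g y \<partial>L n)" for n
  proof -
    have "(\<integral>\<^sup>+y. g y \<partial>L (Suc n)) = (\<integral>\<^sup>+y. \<integral>\<^sup>+z. g z \<partial>K y \<partial>L n)"
      unfolding L_def markov_law_def funpow.simps comp_def
      by (rule nn_integral_bind[OF g_meas K_meas[unfolded L_def markov_law_def]])
    moreover have "c * emeasure (L n) I = (\<integral>\<^sup>+y. c * indicator I y \<partial>L n)"
      using I_meas L_sets[of n] by (simp add: nn_integral_cmult_indicator)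
    moreover have "(\<integral>\<^sup>+y. \<integral>\<^sup>+z. g z \<partial>K y \<partial>L n) + (\<integral>\<^sup>+y. c * indicator I y \<partial>L n)
        = (\<integral>\<^sup>+y. (\<integral>\<^sup>+z. g z \<partial>K y) + c * indicator I y \<partial>L n)"
    proof (rule nn_integral_add[symmetric])
      show "(\<lambda>y. \<integral>\<^sup>+z. g z \<partial>K y) \<in> borel_measurable (L n)"
        using measurable_comp[OF K_meas nn_integral_measurable_subprob_algebra[OF g_meas]]
        by (simp add: comp_def)
      show "(\<lambda>y. c * indicator I y) \<in> borel_measurable (L n)"
        using I_meas L_sets[of n] by (simp cong: measurable_cong_sets)
    qed
    moreover have "(\<integral>\<^sup>+y. (\<integral>\<^sup>+z. g z \<partial>K y) + c * indicator I y \<partial>L n) \<le> (\<integral>\<^sup>+y. g y \<partial>L n)"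
      by (rule nn_integral_mono) (rule drift)
    ultimately show ?thesis by simp
  qed
  have telescope: "(\<integral>\<^sup>+y. g y \<partial>L n) + c * (\<Sum>k<n. emeasure (L k) I) \<le> (\<integral>\<^sup>+y. g y \<partial>\<mu>)" for n
  proof (induction n)
    case 0
    then show ?case by (simp add: L_def markov_law_def)
  next
    case (Suc n)
    have "(\<integral>\<^sup>+y. g y \<partial>L (Suc n)) + c * (\<Sum>k<Suc n. emeasure (L k) I)
        = ((\<integral>\<^sup>+y. g y \<partial>L (Suc n)) + c * emeasure (L n) I) + c * (\<Sum>k<n. emeasure (L k) I)"
      by (simp add: distrib_left add_ac)
    also have "\<dots> \<le> (\<integral>\<^sup>+y. g y \<partial>L n) + c * (\<Sum>k<n. emeasure (L k) I)"
      using one_step[of n] by (rule add_right_mono)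
    finally show ?case using Suc by simp
  qed
  have partial_sums: "(\<Sum>k<n. c * emeasure (L k) I) \<le> (\<integral>\<^sup>+y. g y \<partial>\<mu>)" for n
    using telescope[of n] by (simp add: sum_distrib_left[symmetric])
      (meson add_increasing order_trans zero_le order_refl)
  have "c * renewal_measure \<mu> K I = (\<Sum>k. c * emeasure (L k) I)"
    by (simp add: renewal_measure_def L_def)
  also have "\<dots> \<le> (\<integral>\<^sup>+y. g y \<partial>\<mu>)"
    by (rule suminf_le_const) (auto intro: partial_sums)
  finally show ?thesis .
qed

lemma drift_step_nonneg_jumps:
  fixes g :: "real \<Rightarrow> real"
  assumes Ky: "prob_space (K y)" "sets (K y) = sets borel"
    and jump: "AE z in K y. z \<ge> y"
    and gamma_le: "\<gamma> \<le> measure (K y) {y + A<..}"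
    and g_meas: "g \<in> borel_measurable borel"
    and g_nonneg: "\<And>z. 0 \<le> g z"
    and g_antimono: "\<And>y z. y \<le> z \<Longrightarrow> g z \<le> g y"
    and g_drop: "\<And>z. y \<in> I \<Longrightarrow> y + A < z \<Longrightarrow> g z + 1 \<le> g y"
  shows "(\<integral>\<^sup>+z. ennreal (g z) \<partial>K y) + ennreal \<gamma> * indicator I y \<le> ennreal (g y)"
proof -
  have integral_const: "(\<integral>\<^sup>+z. ennreal (g y) \<partial>K y) = ennreal (g y)"
    using prob_space.emeasure_space_1[OF Ky(1)] by simp
  show ?thesis
  proof (cases "y \<in> I")
    case True
    have "(\<integral>\<^sup>+z. ennreal (g z) \<partial>K y) + ennreal \<gamma>
        \<le> (\<integral>\<^sup>+z. ennreal (g z) \<partial>K y) + emeasure (K y) {y + A<..}"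
      using gamma_le finite_measure.emeasure_eq_measure[OF prob_space.finite_measure[OF Ky(1)]]
      by (auto intro: add_left_mono)
    also have "\<dots> = (\<integral>\<^sup>+z. ennreal (g z) + indicator {y + A<..} z \<partial>K y)"
      using Ky(2) g_meas by (subst nn_integral_add) (auto cong: measurable_cong_sets)
    also have "\<dots> \<le> (\<integral>\<^sup>+z. ennreal (g y) \<partial>K y)"
    proof (rule nn_integral_mono_AE)
      show "AE z in K y. ennreal (g z) + indicator {y + A<..} z \<le> ennreal (g y)"
        using jump
      proof eventually_elim
        case (elim z)
        have "ennreal (g z) + indicator {y + A<..} z = ennreal (g z + indicator {y + A<..} z)"
          using g_nonneg[of z] by (simp add: ennreal_plus indicator_def)
        also have "\<dots> \<le> ennreal (g y)"
          using g_drop[OF True, of z] g_antimono[OF elim] by (auto simp: indicator_def intro: ennreal_leI)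
        finally show ?case .
      qed
    qed
    finally show ?thesis using True integral_const by simp
  next
    case False
    have "(\<integral>\<^sup>+z. ennreal (g z) \<partial>K y) \<le> (\<integral>\<^sup>+z. ennreal (g y) \<partial>K y)"
      by (rule nn_integral_mono_AE) (use jump in \<open>auto intro: ennreal_leI g_antimono\<close>)
    then show ?thesis using False integral_const by simp
  qed
qed

definition ramp :: "real \<Rightarrow> real \<Rightarrow> real \<Rightarrow> real \<Rightarrow> real" where
  "ramp A x h y = min ((A + h) / A) (max 0 ((x + h - y) / A + 1))"

lemma ramp_measurable: "ramp A x h \<in> borel_measurable borel"
  unfolding ramp_def by measurable

lemma ramp_nonneg: "A > 0 \<Longrightarrow> h > 0 \<Longrightarrow> 0 \<le> ramp A x h y"
  unfolding ramp_def by auto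

lemma ramp_le: "ramp A x h y \<le> (A + h) / A"
  unfolding ramp_def by auto

lemma ramp_antimono:
  assumes "A > 0" "y \<le> z"
  shows "ramp A x h z \<le> ramp A x h y"
proof -
  have "(x + h - z) / A \<le> (x + h - y) / A"
    using assms by (intro divide_right_mono) auto
  then show ?thesis unfolding ramp_def by (intro min.mono max.mono) auto
qed

text \<open>From a point of \<open>(x, x+h]\<close> to any point more than \<open>A\<close> to its right, the ramp
  drops by at least 1 (on that interval it is unclipped from above).\<close>
lemma ramp_drop:
  assumes "A > 0" "y \<in> {x<..x + h}" "y + A < z"
  shows "ramp A x h z + 1 \<le> ramp A x h y"
proof -
  have y_val: "ramp A x h y = (x + h - y) / A + 1"
    using assms unfolding ramp_def by (auto simp: field_simps)
  have "((x + h - z) + A) / A \<le> (x + h - y) / A"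
    using assms by (intro divide_right_mono) auto
  then have "(x + h - z) / A + 1 \<le> (x + h - y) / A"
    using assms by (simp add: add_divide_distrib)
  moreover have "0 \<le> (x + h - y) / A"
    using assms by auto
  ultimately show ?thesis
    unfolding y_val by (simp add: ramp_def)
qed

lemma ennreal_le_divide_of_mult_le:
  fixes u :: ennreal and c M :: real
  assumes "c > 0" "M \<ge> 0" "ennreal c * u \<le> ennreal M"
  shows "u \<le> ennreal (M / c)"
proof -
  have "u = ennreal (1 / c) * (ennreal c * u)"
    using assms(1) by (simp add: mult.assoc[symmetric] ennreal_mult[symmetric])
  also have "\<dots> \<le> ennreal (1 / c) * ennreal M"
    using assms(3) by (rule mult_left_mono) simp
  also have "\<dots> = ennreal (M / c)"
    using assms(1,2) by (simp add: ennreal_mult[symmetric])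
  finally show ?thesis .
qed

theorem mainTheorem5:
  fixes \<mu> :: "real measure" and K :: "real \<Rightarrow> real measure" and A \<gamma> x h :: real
  assumes init: "prob_space \<mu>" "sets \<mu> = sets borel"
    and kernel: "K \<in> borel \<rightarrow>\<^sub>M prob_algebra borel"
    and nonneg_jumps: "\<And>y. AE z in K y. z \<ge> y"
    and A_pos: "A > 0"
    and gamma_def: "\<gamma> = (INF y. measure (K y) {y + A<..})"
    and gamma_pos: "\<gamma> > 0"
    and h_pos: "h > 0"
  shows "renewal_measure \<mu> K {x<..x + h} \<le> ennreal ((A + h) / (\<gamma>\<^sup>2 * A))"
proof -
  define g where "g = ramp A x h"
  define M where "M = (A + h) / A"
  have Ky: "prob_space (K y)" "sets (K y) = sets borel" for y
    using measurable_space[OF kernel, of y] by (auto simp: space_prob_algebra)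
  have gamma_le: "\<gamma> \<le> measure (K y) {y + A<..}" for y
    unfolding gamma_def by (rule cINF_lower) (auto intro!: bdd_belowI[of _ 0])
  have gamma_le_1: "\<gamma> \<le> 1"
    using gamma_le[of 0] prob_space.prob_le_1[OF Ky(1)] by (meson order_trans)
  have drift: "(\<integral>\<^sup>+z. ennreal (g z) \<partial>K y) + ennreal \<gamma> * indicator {x<..x + h} y \<le> ennreal (g y)" for y
    unfolding g_def
    by (rule drift_step_nonneg_jumps[OF Ky nonneg_jumps gamma_le ramp_measurable])
      (use A_pos h_pos in \<open>auto intro: ramp_nonneg ramp_antimono ramp_drop\<close>)
  have "ennreal \<gamma> * renewal_measure \<mu> K {x<..x + h} \<le> (\<integral>\<^sup>+y. ennreal (g y) \<partial>\<mu>)"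
    using drift_renewal_bound[OF init kernel _ _ drift] g_def ramp_measurable by simp
  also have "\<dots> \<le> (\<integral>\<^sup>+y. ennreal M \<partial>\<mu>)"
    unfolding g_def M_def by (intro nn_integral_mono ennreal_leI ramp_le)
  also have "\<dots> = ennreal M"
    using prob_space.emeasure_space_1[OF init(1)] by simp
  finally have "renewal_measure \<mu> K {x<..x + h} \<le> ennreal (M / \<gamma>)"
    using gamma_pos A_pos h_pos by (intro ennreal_le_divide_of_mult_le) (auto simp: M_def)
  also have "\<dots> \<le> ennreal ((A + h) / (\<gamma>\<^sup>2 * A))"
  proof (rule ennreal_leI)
    have "\<gamma>\<^sup>2 * A \<le> \<gamma> * A"
      using gamma_pos gamma_le_1 A_pos by (simp add: power2_eq_square mult_right_mono)
    then have "(A + h) / (\<gamma> * A) \<le> (A + h) / (\<gamma>\<^sup>2 * A)"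
      using A_pos h_pos gamma_pos by (intro divide_left_mono) auto
    then show "M / \<gamma> \<le> (A + h) / (\<gamma>\<^sup>2 * A)"
      by (simp add: M_def mult.commute)
  qed
  finally show ?thesis .
qed

end
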